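(* There exist absolute constants $c_0>0$ and $n_0$ such that for every $n\ge n_0$ for which $\sqrt n$ is an even integer, there exist a read-once DNF formula $f:\{0,1\}^n\to\{0,1\}$ and a probability vector $p\in(0,1)^n$ such that, under unit costs ($c_i=1$ for all $i$), $$\mathsf{OPT}_{\mathcal N}(f,c,p)\ge c_0\sqrt{n}\cdot \mathsf{OPT}_{\mathcal A}(f,c,p).$$
   Context: Stochastic Boolean Function Evaluation (SBFE) setup: $f:\{0,1\}^n\to\{0,1\}$ is a known Boolean function, $c\in\mathbb{R}_{>0}^n$ a cost vector and $p\in(0,1)^n$ a probability vector. The unknown input $x\in\{0,1\}^n$ is random with independent coordinates and $\Pr(x_i=1)=p_i$. The value $x_i$ can only be learned by testing variable $i$, at cost $c_i$. A strategy tests variables sequentially until $f(x)$ is determined, i.e. until $f(x')=f(x)$ for every $x'$ agreeing with $x$ on all tested coordinates. An adaptive strategy is a decision tree (the next test may depend on previous outcomes); a non-adaptive strategy is a fixed permutation of $[n]$, with variables tested in that order until $f(x)$ is determined. $\mathrm{cost}_{c,p}(f,S)$ is the expected total cost of tests performed by $S$ for random $x$. $\mathsf{OPT}_{\mathcal A}(f,c,p)$ (resp. $\mathsf{OPT}_{\mathcal N}(f,c,p)$) is the minimum of $\mathrm{cost}_{c,p}(f,S)$ over all adaptive (resp. non-adaptive) strategies. A DNF formula is a disjunction of terms, each a conjunction of literals; it is read-once if no variable is negated and distinct terms contain disjoint sets of variables. *)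

theory Defs
  imports Complex_Main
begin

text \<open>Inputs x in {0,1}^n are represented by the set of coordinates equal to 1,
  i.e. subsets of {..<n}. A Boolean function is f :: nat set => bool
  (only its values on subsets of {..<n} matter).\<close>

definition inputs :: "nat \<Rightarrow> nat set set" where
  "inputs n = Pow {..<n}"

definition prob_input :: "nat \<Rightarrow> (nat \<Rightarrow> real) \<Rightarrow> nat set \<Rightarrow> real" where
  "prob_input n p x = (\<Prod>i<n. if i \<in> x then p i else 1 - p i)"

definition determined :: "nat \<Rightarrow> (nat set \<Rightarrow> bool) \<Rightarrow> nat set \<Rightarrow> nat set \<Rightarrow> bool" where
  "determined n f T x \<longleftrightarrow> (\<forall>y\<in>inputs n. y \<inter> T = x \<inter> T \<longrightarrow> f y = f x)"

text \<open>Adaptive strategies: decision trees. Node i l r tests variable i and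
  continues with l if x_i = 0 and with r if x_i = 1.\<close>
datatype dtree = Leaf | Node nat dtree dtree

fun tree_ok :: "nat \<Rightarrow> (nat set \<Rightarrow> bool) \<Rightarrow> dtree \<Rightarrow> nat set \<Rightarrow> nat set \<Rightarrow> bool" where
  "tree_ok n f Leaf T x = determined n f T x"
| "tree_ok n f (Node i l r) T x =
     (determined n f T x \<or> (i < n \<and> tree_ok n f (if i \<in> x then r else l) (insert i T) x))"

fun tree_cost :: "(nat \<Rightarrow> real) \<Rightarrow> nat \<Rightarrow> (nat set \<Rightarrow> bool) \<Rightarrow> dtree \<Rightarrow> nat set \<Rightarrow> nat set \<Rightarrow> real" where
  "tree_cost c n f Leaf T x = 0"
| "tree_cost c n f (Node i l r) T x =
     (if determined n f T x then 0
      else c i + tree_cost c n f (if i \<in> x then r else l) (insert i T) x)"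

definition valid_tree :: "nat \<Rightarrow> (nat set \<Rightarrow> bool) \<Rightarrow> dtree \<Rightarrow> bool" where
  "valid_tree n f t \<longleftrightarrow> (\<forall>x\<in>inputs n. tree_ok n f t {} x)"

definition exp_cost_tree :: "nat \<Rightarrow> (nat set \<Rightarrow> bool) \<Rightarrow> (nat \<Rightarrow> real) \<Rightarrow> (nat \<Rightarrow> real) \<Rightarrow> dtree \<Rightarrow> real" where
  "exp_cost_tree n f c p t = (\<Sum>x\<in>inputs n. prob_input n p x * tree_cost c n f t {} x)"

definition OPT_A :: "nat \<Rightarrow> (nat set \<Rightarrow> bool) \<Rightarrow> (nat \<Rightarrow> real) \<Rightarrow> (nat \<Rightarrow> real) \<Rightarrow> real" where
  "OPT_A n f c p = Inf (exp_cost_tree n f c p ` {t. valid_tree n f t})"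

text \<open>Non-adaptive strategies: permutations of [n] given as distinct lists.
  The cost on x is the total cost of the shortest prefix after which f(x) is determined.\<close>
definition perms :: "nat \<Rightarrow> nat list set" where
  "perms n = {\<sigma>. distinct \<sigma> \<and> set \<sigma> = {..<n}}"

definition perm_stop :: "nat \<Rightarrow> (nat set \<Rightarrow> bool) \<Rightarrow> nat list \<Rightarrow> nat set \<Rightarrow> nat" where
  "perm_stop n f \<sigma> x = (LEAST k. determined n f (set (take k \<sigma>)) x)"

definition perm_cost :: "(nat \<Rightarrow> real) \<Rightarrow> nat \<Rightarrow> (nat set \<Rightarrow> bool) \<Rightarrow> nat list \<Rightarrow> nat set \<Rightarrow> real" where
  "perm_cost c n f \<sigma> x = (\<Sum>j<perm_stop n f \<sigma> x. c (\<sigma> ! j))"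

definition exp_cost_perm :: "nat \<Rightarrow> (nat set \<Rightarrow> bool) \<Rightarrow> (nat \<Rightarrow> real) \<Rightarrow> (nat \<Rightarrow> real) \<Rightarrow> nat list \<Rightarrow> real" where
  "exp_cost_perm n f c p \<sigma> = (\<Sum>x\<in>inputs n. prob_input n p x * perm_cost c n f \<sigma> x)"

definition OPT_N :: "nat \<Rightarrow> (nat set \<Rightarrow> bool) \<Rightarrow> (nat \<Rightarrow> real) \<Rightarrow> (nat \<Rightarrow> real) \<Rightarrow> real" where
  "OPT_N n f c p = Inf (exp_cost_perm n f c p ` perms n)"

text \<open>Read-once (monotone) DNF: a nonempty finite family of nonempty, pairwise
  disjoint terms, each term a set of variables in {..<n}.\<close>
definition read_once_dnf :: "nat \<Rightarrow> nat set set \<Rightarrow> bool" where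
  "read_once_dnf n F \<longleftrightarrow> finite F \<and> F \<noteq> {} \<and> (\<forall>T\<in>F. T \<noteq> {} \<and> T \<subseteq> {..<n})
     \<and> (\<forall>S\<in>F. \<forall>T\<in>F. S \<noteq> T \<longrightarrow> S \<inter> T = {})"

definition dnf_eval :: "nat set set \<Rightarrow> nat set \<Rightarrow> bool" where
  "dnf_eval F x \<longleftrightarrow> (\<exists>T\<in>F. T \<subseteq> x)"

end

theory Submission
  imports Defs
begin

text \<open>Let n = k^2 and let the formula be the disjunction of k disjoint blocks of k variables.
  The first variable (head) of each block is 1 with probability 1/(2k), every other variable
  (filler) with probability 1 - 1/k^4. Adaptively, test the blocks in turn and leave a block at
  its first 0: unless some filler is 0, which has probability at most 1/k^2, this costs at most
  2k, so the adaptive optimum is at most 2k + 1. A fixed order, after k^2/2 tests, has tested at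
  most k/2 blocks completely. On the input whose only 1s are the fillers and the head of block j,
  the value is known only once block j is completely tested; for each of the remaining k/2 blocks
  this input has probability at least 1/(8k), so every order costs at least k^2/32.\<close>

lemma sum_Pow_prod_if:
  fixes a b :: "'a \<Rightarrow> 'b::comm_semiring_1"
  assumes "finite A"
  shows "(\<Sum>x\<in>Pow A. \<Prod>i\<in>A. if i \<in> x then a i else b i) = (\<Prod>i\<in>A. a i + b i)"
proof -
  have "(\<Prod>i\<in>A. if i \<in> x then a i else b i) = prod a x * prod b (A - x)" if "x \<subseteq> A" for x
  proof -
    have "A \<inter> {i. i \<in> x} = x" "A \<inter> - {i. i \<in> x} = A - x" using that by auto
    then show ?thesis using prod.If_cases[OF assms, of "\<lambda>i. i \<in> x" a b] by simp
  qed
  then show ?thesis by (simp add: prod_add[OF assms])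
qed

lemma sum_prob_input:
  "(\<Sum>x\<in>inputs n. prob_input n p x) = 1"
  unfolding inputs_def prob_input_def
  using sum_Pow_prod_if[of "{..<n}" p "\<lambda>i. 1 - p i"] by simp

lemma sum_prob_input_superset:
  assumes "G \<subseteq> {..<n}"
  shows "(\<Sum>x\<in>inputs n. if G \<subseteq> x then prob_input n p x else 0) = (\<Prod>i\<in>G. p i)"
proof -
  define b where "b i = (if i \<in> G then 0 else 1 - p i)" for i
  have "(if G \<subseteq> x then prob_input n p x else 0) = (\<Prod>i<n. if i \<in> x then p i else b i)"
    if "x \<in> inputs n" for x
  proof (cases "G \<subseteq> x")
    case True
    then show ?thesis unfolding prob_input_def b_def by (auto intro!: prod.cong)
  next
    case False
    then obtain i where "i \<in> G" "i \<notin> x" by auto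
    then have "(\<Prod>i<n. if i \<in> x then p i else b i) = 0"
      using assms by (intro prod_zero) (auto simp: b_def)
    then show ?thesis using False by simp
  qed
  then have "(\<Sum>x\<in>inputs n. if G \<subseteq> x then prob_input n p x else 0)
      = (\<Sum>x\<in>Pow {..<n}. \<Prod>i<n. if i \<in> x then p i else b i)"
    by (intro sum.cong) (auto simp: inputs_def)
  also have "\<dots> = (\<Prod>i<n. p i + b i)" by (simp add: sum_Pow_prod_if)
  also have "\<dots> = (\<Prod>i<n. if i \<in> G then p i else 1)" by (intro prod.cong) (auto simp: b_def)
  also have "\<dots> = (\<Prod>i\<in>G. p i)"
    using assms by (simp add: prod.If_cases Int_absorb1 Int_def[symmetric])
  finally show ?thesis .
qed

lemma prob_input_nonneg:
  assumes "\<And>i. i < n \<Longrightarrow> 0 \<le> p i \<and> p i \<le> 1"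
  shows "0 \<le> prob_input n p x"
  unfolding prob_input_def using assms by (intro prod_nonneg) auto

lemma tree_cost_nonneg:
  assumes "\<And>i. 0 \<le> c i"
  shows "0 \<le> tree_cost c n f t T x"
  using assms by (induction t arbitrary: T) auto

lemma OPT_A_le_exp_cost_tree:
  assumes "\<And>i. i < n \<Longrightarrow> 0 \<le> p i \<and> p i \<le> 1" "\<And>i. 0 \<le> c i" "valid_tree n f t"
  shows "OPT_A n f c p \<le> exp_cost_tree n f c p t"
  unfolding OPT_A_def
proof (rule cInf_lower)
  show "bdd_below (exp_cost_tree n f c p ` {t. valid_tree n f t})"
    by (rule bdd_belowI[of _ 0]) (auto simp: exp_cost_tree_def intro!: sum_nonneg
        mult_nonneg_nonneg prob_input_nonneg tree_cost_nonneg assms(1,2))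
qed (use assms(3) in auto)

lemma exp_cost_tree_le:
  assumes "\<And>i. i < n \<Longrightarrow> 0 \<le> p i \<and> p i \<le> 1" "G \<subseteq> {..<n}" "0 \<le> a"
    and "\<And>x. x \<in> inputs n \<Longrightarrow> tree_cost c n f t {} x \<le> b"
    and "\<And>x. x \<in> inputs n \<Longrightarrow> G \<subseteq> x \<Longrightarrow> tree_cost c n f t {} x \<le> a"
  shows "exp_cost_tree n f c p t \<le> a + b * (1 - (\<Prod>i\<in>G. p i))"
proof -
  let ?P = "prob_input n p"
  have "exp_cost_tree n f c p t
      \<le> (\<Sum>x\<in>inputs n. a * ?P x + b * (?P x - (if G \<subseteq> x then ?P x else 0)))"
    unfolding exp_cost_tree_def
  proof (rule sum_mono)
    fix x assume x: "x \<in> inputs n"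
    have P: "0 \<le> ?P x" by (rule prob_input_nonneg[OF assms(1)])
    show "?P x * tree_cost c n f t {} x \<le> a * ?P x + b * (?P x - (if G \<subseteq> x then ?P x else 0))"
    proof (cases "G \<subseteq> x")
      case True
      then show ?thesis using mult_left_mono[OF assms(5)[OF x True] P] by (simp add: mult.commute)
    next
      case False
      then show ?thesis using mult_left_mono[OF assms(4)[OF x] P] P \<open>0 \<le> a\<close>
        by (simp add: mult.commute add_increasing)
    qed
  qed
  also have "\<dots> = a + b * (1 - (\<Prod>i\<in>G. p i))"
    by (simp add: sum.distrib sum_subtractf sum_distrib_left[symmetric]
        sum_prob_input sum_prob_input_superset[OF assms(2)])
  finally show ?thesis .
qed

section \<open>Decision trees testing a DNF term by term\<close>

fun term_tree :: "nat list \<Rightarrow> dtree \<Rightarrow> dtree" where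
  "term_tree [] t0 = Leaf"
| "term_tree (v # vs) t0 = Node v t0 (term_tree vs t0)"

fun dnf_tree :: "nat list list \<Rightarrow> dtree" where
  "dnf_tree [] = Leaf"
| "dnf_tree (vs # tss) = term_tree vs (dnf_tree tss)"

fun path_length :: "dtree \<Rightarrow> nat set \<Rightarrow> nat" where
  "path_length Leaf x = 0"
| "path_length (Node i l r) x = Suc (path_length (if i \<in> x then r else l) x)"

lemma tree_cost_le_path_length: "tree_cost (\<lambda>_. 1) n f t T x \<le> real (path_length t x)"
  by (induction t arbitrary: T) auto

lemma path_length_term_tree_le: "path_length (term_tree vs t0) x \<le> length vs + path_length t0 x"
  by (induction vs) auto

lemma path_length_term_tree_subset: "set vs \<subseteq> x \<Longrightarrow> path_length (term_tree vs t0) x = length vs"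
  by (induction vs) auto

lemma path_length_dnf_tree_le: "path_length (dnf_tree tss) x \<le> sum_list (map length tss)"
proof (induction tss)
  case (Cons vs tss)
  then show ?case using path_length_term_tree_le[of vs "dnf_tree tss" x] by simp
qed simp

text \<open>If every term fails at most at its first variable, each term costs one test until
  the first true term is met, which then costs at most its length.\<close>
lemma path_length_dnf_tree_tails_le:
  assumes "\<And>vs. vs \<in> set tss \<Longrightarrow> vs \<noteq> [] \<and> length vs \<le> K \<and> set (tl vs) \<subseteq> x"
  shows "path_length (dnf_tree tss) x \<le> length tss + K"
  using assms
proof (induction tss)
  case (Cons vs tss)
  then obtain v ws where vs: "vs = v # ws" by (cases vs) auto
  show ?case
  proof (cases "v \<in> x")
    case True
    then have "set vs \<subseteq> x" using Cons.prems vs by force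
    then show ?thesis using path_length_term_tree_subset[of vs x] Cons.prems by force
  next
    case False
    then show ?thesis using Cons vs by simp
  qed
qed simp

lemma tree_ok_term_tree:
  assumes "C \<in> F" "set vs \<subseteq> C" "C - set vs \<subseteq> T \<inter> x" "\<forall>v\<in>set vs. v < n"
    and "\<And>T'. T \<subseteq> T' \<Longrightarrow> (\<exists>v\<in>C \<inter> T'. v \<notin> x) \<Longrightarrow> tree_ok n (dnf_eval F) t0 T' x"
  shows "tree_ok n (dnf_eval F) (term_tree vs t0) T x"
  using assms(2-)
proof (induction vs arbitrary: T)
  case Nil
  then have "C \<subseteq> T" "C \<subseteq> x" by auto
  then have "C \<subseteq> y" if "y \<inter> T = x \<inter> T" for y using that by blast
  then show ?case using assms(1) \<open>C \<subseteq> x\<close> by (auto simp: determined_def dnf_eval_def)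
next
  case (Cons v vs)
  show ?case
  proof (cases "v \<in> x")
    case True
    have "tree_ok n (dnf_eval F) (term_tree vs t0) (insert v T) x"
      by (rule Cons.IH) (use Cons.prems True in auto)
    then show ?thesis using True Cons.prems by simp
  next
    case False
    have "tree_ok n (dnf_eval F) t0 (insert v T) x"
      by (rule Cons.prems(4)) (use Cons.prems False in auto)
    then show ?thesis using False Cons.prems by simp
  qed
qed

text \<open>Invariant: every term not among the remaining ones has already been falsified.\<close>
lemma tree_ok_dnf_tree:
  assumes "\<forall>C\<in>F. C \<notin> set (map set tss) \<longrightarrow> (\<exists>v\<in>C \<inter> T. v \<notin> x)"
    and "set (map set tss) \<subseteq> F" "\<forall>vs\<in>set tss. \<forall>v\<in>set vs. v < n"
  shows "tree_ok n (dnf_eval F) (dnf_tree tss) T x"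
  using assms
proof (induction tss arbitrary: T)
  case Nil
  then have "\<not> dnf_eval F y" if "y \<inter> T = x \<inter> T" for y
    using that unfolding dnf_eval_def by fastforce
  then show ?case by (auto simp: determined_def)
next
  case (Cons vs tss)
  show ?case unfolding dnf_tree.simps
  proof (rule tree_ok_term_tree[where C = "set vs"])
    fix T' assume "T \<subseteq> T'" and falsified: "\<exists>v\<in>set vs \<inter> T'. v \<notin> x"
    show "tree_ok n (dnf_eval F) (dnf_tree tss) T' x"
    proof (rule Cons.IH)
      show "\<forall>C\<in>F. C \<notin> set (map set tss) \<longrightarrow> (\<exists>v\<in>C \<inter> T'. v \<notin> x)"
      proof (intro ballI impI)
        fix C assume "C \<in> F" "C \<notin> set (map set tss)"
        then show "\<exists>v\<in>C \<inter> T'. v \<notin> x"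
          using Cons.prems(1) falsified \<open>T \<subseteq> T'\<close> by (cases "C = set vs") auto
      qed
    qed (use Cons.prems in auto)
  qed (use Cons.prems in auto)
qed

lemma valid_dnf_tree:
  assumes "F = set (map set tss)" "\<forall>vs\<in>set tss. \<forall>v\<in>set vs. v < n"
  shows "valid_tree n (dnf_eval F) (dnf_tree tss)"
  unfolding valid_tree_def using assms by (auto intro: tree_ok_dnf_tree)

section \<open>Non-adaptive strategies\<close>

lemma determined_mono: "determined n f T x \<Longrightarrow> T \<subseteq> T' \<Longrightarrow> determined n f T' x"
  unfolding determined_def by blast

lemma determined_all: "x \<in> inputs n \<Longrightarrow> {..<n} \<subseteq> T \<Longrightarrow> determined n f T x"
  unfolding determined_def inputs_def
proof (intro ballI impI)
  fix y assume "x \<in> Pow {..<n}" "{..<n} \<subseteq> T" "y \<in> Pow {..<n}" "y \<inter> T = x \<inter> T"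
  then have "y = x" by auto
  then show "f y = f x" by simp
qed

lemma perm_stop_ge:
  assumes "\<sigma> \<in> perms n" "x \<in> inputs n" "\<not> determined n f (set (take m \<sigma>)) x"
  shows "m \<le> perm_stop n f \<sigma> x"
proof (rule ccontr)
  assume "\<not> m \<le> perm_stop n f \<sigma> x"
  then have le: "perm_stop n f \<sigma> x \<le> m" by simp
  have "determined n f (set (take (length \<sigma>) \<sigma>)) x"
    using assms(1,2) by (intro determined_all) (auto simp: perms_def)
  then have "determined n f (set (take (perm_stop n f \<sigma> x) \<sigma>)) x"
    unfolding perm_stop_def by (rule LeastI)
  then have "determined n f (set (take m \<sigma>)) x"
    by (rule determined_mono) (rule set_take_subset_set_take[OF le])
  then show False using assms(3) by simp
qed

lemma perms_nonempty: "perms n \<noteq> {}"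
proof -
  have "[0..<n] \<in> perms n" by (simp add: perms_def atLeast0LessThan)
  then show ?thesis by blast
qed

lemma sum_le_exp_cost_perm:
  assumes "\<And>i. i < n \<Longrightarrow> 0 \<le> p i \<and> p i \<le> 1" "\<And>i. 0 \<le> c i" "A \<subseteq> inputs n"
  shows "(\<Sum>x\<in>A. prob_input n p x * perm_cost c n f \<sigma> x) \<le> exp_cost_perm n f c p \<sigma>"
  unfolding exp_cost_perm_def
proof (rule sum_mono2)
  fix x
  have "0 \<le> prob_input n p x" by (rule prob_input_nonneg[OF assms(1)])
  moreover have "0 \<le> perm_cost c n f \<sigma> x" unfolding perm_cost_def by (rule sum_nonneg) (rule assms(2))
  ultimately show "0 \<le> prob_input n p x * perm_cost c n f \<sigma> x" by simp
qed (use assms(3) in \<open>auto simp: inputs_def\<close>)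

section \<open>The block formula\<close>

definition block :: "nat \<Rightarrow> nat \<Rightarrow> nat set" where
  "block k j = {j*k..<j*k+k}"

definition blocks :: "nat \<Rightarrow> nat set set" where
  "blocks k = block k ` {..<k}"

definition block_lists :: "nat \<Rightarrow> nat list list" where
  "block_lists k = map (\<lambda>j. [j*k..<j*k+k]) [0..<k]"

definition fillers :: "nat \<Rightarrow> nat set" where
  "fillers k = {i. i < k*k \<and> i mod k \<noteq> 0}"

definition block_prob :: "nat \<Rightarrow> nat \<Rightarrow> real" where
  "block_prob k i = (if i mod k = 0 then 1 / (2 * real k) else 1 - 1 / real k ^ 4)"

lemma mem_block_iff:
  assumes "0 < k"
  shows "i \<in> block k j \<longleftrightarrow> i div k = j"
proof
  assume "i \<in> block k j"
  then show "i div k = j" unfolding block_def by (intro div_nat_eqI) (auto simp: mult.commute)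
next
  assume "i div k = j"
  moreover have "i div k * k \<le> i" "i < k + i div k * k"
    using div_times_less_eq_dividend dividend_less_div_times[OF assms] by auto
  ultimately show "i \<in> block k j" unfolding block_def by auto
qed

lemma block_subset:
  assumes "j < k"
  shows "block k j \<subseteq> {..<k*k}"
proof -
  have "j*k + k \<le> k*k" using mult_le_mono1[of "Suc j" k k] assms by simp
  then show ?thesis unfolding block_def by auto
qed

lemma block_disjoint: "0 < k \<Longrightarrow> i \<noteq> j \<Longrightarrow> block k i \<inter> block k j = {}"
  by (auto simp: mem_block_iff)

lemma block_minus_head_subset_fillers:
  assumes "0 < k" "j < k"
  shows "block k j - {j*k} \<subseteq> fillers k"
proof
  fix i assume i: "i \<in> block k j - {j*k}"
  then have "i div k = j" using mem_block_iff[OF assms(1)] by blast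
  then have "i mod k \<noteq> 0" using i div_mult_mod_eq[of i k] by auto
  then show "i \<in> fillers k" using i block_subset[OF assms(2)] by (auto simp: fillers_def)
qed

lemma read_once_dnf_blocks:
  assumes "0 < k"
  shows "read_once_dnf (k*k) (blocks k)"
  unfolding read_once_dnf_def blocks_def
proof (intro conjI ballI impI)
  show "block k ` {..<k} \<noteq> {}" using assms by (simp add: lessThan_empty_iff)
next
  fix T assume "T \<in> block k ` {..<k}"
  then obtain j where "j < k" "T = block k j" by blast
  then show "T \<noteq> {}" "T \<subseteq> {..<k*k}" using assms block_subset by (auto simp: block_def)
next
  fix S T assume "S \<in> block k ` {..<k}" "T \<in> block k ` {..<k}" "S \<noteq> T"
  then obtain i j where "S = block k i" "T = block k j" "i \<noteq> j" by blast
  then show "S \<inter> T = {}" using block_disjoint[OF assms] by simp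
qed simp

lemma block_prob_bounds:
  assumes "2 \<le> k"
  shows "0 < block_prob k i" "block_prob k i < 1"
proof -
  have "(2::real) ^ 4 \<le> real k ^ 4" using assms by (intro power_mono) auto
  then have "1 < real k ^ 4" by simp
  then have "0 < 1 / real k ^ 4" "1 / real k ^ 4 < 1"
    using assms by (auto simp del: of_nat_power simp add: divide_less_eq)
  moreover have "0 < 1 / (2 * real k)" "1 / (2 * real k) < 1" using assms by auto
  ultimately show "0 < block_prob k i" "block_prob k i < 1" unfolding block_prob_def by auto
qed

lemma block_prob_unit_interval: "2 \<le> k \<Longrightarrow> 0 \<le> block_prob k i \<and> block_prob k i \<le> 1"
  using block_prob_bounds by (simp add: less_imp_le)

lemma prod_fillers_ge:
  assumes "2 \<le> k"
  shows "1 - 1 / real (k*k) \<le> (\<Prod>i\<in>fillers k. block_prob k i)"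
proof -
  let ?d = "1 / real k ^ 4"
  have d: "0 \<le> ?d" "?d \<le> 1" using assms by (auto simp: field_simps)
  have "card (fillers k) \<le> k*k"
    using card_mono[of "{..<k*k}" "fillers k"] by (auto simp: fillers_def)
  have "1 - 1 / real (k*k) = 1 + real (k*k) * - ?d"
    using assms by (simp add: power4_eq_xxxx)
  also have "\<dots> \<le> (1 - ?d) ^ (k*k)"
    using Bernoulli_inequality[of "- ?d" "k*k"] d by simp
  also have "\<dots> \<le> (1 - ?d) ^ card (fillers k)"
    by (rule power_decreasing[OF \<open>card (fillers k) \<le> k*k\<close>]) (use d in auto)
  also have "\<dots> = (\<Prod>i\<in>fillers k. block_prob k i)"
    by (simp add: fillers_def block_prob_def)
  finally show ?thesis .
qed

lemma path_length_blocks_le: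
  assumes "0 < k" "fillers k \<subseteq> x"
  shows "path_length (dnf_tree (block_lists k)) x \<le> 2 * k"
proof -
  have "path_length (dnf_tree (block_lists k)) x \<le> length (block_lists k) + k"
  proof (rule path_length_dnf_tree_tails_le)
    fix vs assume "vs \<in> set (block_lists k)"
    then obtain j where j: "j < k" "vs = [j*k..<j*k+k]" unfolding block_lists_def by auto
    then have "set (tl vs) = block k j - {j*k}" by (auto simp: block_def)
    then show "vs \<noteq> [] \<and> length vs \<le> k \<and> set (tl vs) \<subseteq> x"
      using j assms block_minus_head_subset_fillers[OF assms(1) j(1)] by auto
  qed
  then show ?thesis by (simp add: block_lists_def)
qed

lemma OPT_A_blocks_le:
  assumes "2 \<le> k"
  shows "OPT_A (k*k) (dnf_eval (blocks k)) (\<lambda>_. 1) (block_prob k) \<le> 2 * real k + 1"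
proof -
  let ?f = "dnf_eval (blocks k)" and ?t = "dnf_tree (block_lists k)"
  have k: "0 < k" using assms by simp
  have "valid_tree (k*k) ?f ?t"
  proof (rule valid_dnf_tree)
    show "\<forall>vs\<in>set (block_lists k). \<forall>v\<in>set vs. v < k*k"
      using block_subset by (fastforce simp: block_lists_def block_def)
  qed (simp add: blocks_def block_lists_def block_def image_image atLeast0LessThan)
  then have "OPT_A (k*k) ?f (\<lambda>_. 1) (block_prob k) \<le> exp_cost_tree (k*k) ?f (\<lambda>_. 1) (block_prob k) ?t"
    using block_prob_unit_interval[OF assms] by (intro OPT_A_le_exp_cost_tree) auto
  also have "\<dots> \<le> 2 * real k + real (k*k) * (1 - (\<Prod>i\<in>fillers k. block_prob k i))"
  proof (rule exp_cost_tree_le)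
    fix x
    have "path_length ?t x \<le> k*k"
      using path_length_dnf_tree_le[of "block_lists k" x]
      by (simp add: block_lists_def comp_def sum_list_triv)
    then show "tree_cost (\<lambda>_. 1) (k*k) ?f ?t {} x \<le> real (k*k)"
      using tree_cost_le_path_length[of "k*k" ?f ?t "{}" x] by linarith
    assume "fillers k \<subseteq> x"
    then show "tree_cost (\<lambda>_. 1) (k*k) ?f ?t {} x \<le> 2 * real k"
      using tree_cost_le_path_length[of "k*k" ?f ?t "{}" x] path_length_blocks_le[OF k]
      by (metis of_nat_le_iff order_trans of_nat_mult of_nat_numeral)
  qed (use block_prob_unit_interval[OF assms] in \<open>auto simp: fillers_def\<close>)
  also have "\<dots> \<le> 2 * real k + real (k*k) * (1 / real (k*k))"
    using prod_fillers_ge[OF assms] by (intro add_left_mono mult_left_mono) auto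
  finally show ?thesis using k by simp
qed

definition witness :: "nat \<Rightarrow> nat \<Rightarrow> nat set" where
  "witness k j = insert (j*k) (fillers k)"

lemma witness_subset: "j < k \<Longrightarrow> witness k j \<subseteq> {..<k*k}"
  using block_subset[of j k] by (auto simp: witness_def fillers_def block_def)

lemma block_subset_witness: "0 < k \<Longrightarrow> j < k \<Longrightarrow> block k j \<subseteq> witness k j"
  using block_minus_head_subset_fillers by (auto simp: witness_def)

lemma block_subset_if_determined_witness:
  assumes "0 < k" "j < k" "determined (k*k) (dnf_eval (blocks k)) S (witness k j)"
  shows "block k j \<subseteq> S"
proof (rule ccontr)
  assume "\<not> block k j \<subseteq> S"
  then obtain v where v: "v \<in> block k j" "v \<notin> S" by blast
  let ?y = "witness k j \<inter> S"
  have "?y \<in> inputs (k*k)" using witness_subset[OF assms(2)] by (auto simp: inputs_def)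
  moreover have "dnf_eval (blocks k) (witness k j)"
    unfolding dnf_eval_def blocks_def using block_subset_witness[OF assms(1,2)] assms(2) by blast
  ultimately have "dnf_eval (blocks k) ?y" using assms(3) unfolding determined_def by auto
  then obtain j' where j': "j' < k" "block k j' \<subseteq> ?y" unfolding dnf_eval_def blocks_def by blast
  show False
  proof (cases "j' = j")
    case True
    then show False using j' v by auto
  next
    case False
    have "j'*k \<in> block k j'" using assms(1) by (simp add: block_def)
    then have "j'*k \<in> witness k j" using j' by auto
    moreover have "j'*k \<noteq> j*k" using False assms(1) by simp
    ultimately show False by (simp add: witness_def fillers_def)
  qed
qed

lemma inj_on_witness:
  assumes "0 < k"
  shows "inj_on (witness k) {..<k}"
proof
  fix i j assume "i \<in> {..<k}" "j \<in> {..<k}" "witness k i = witness k j"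
  moreover have "i*k \<in> witness k i" by (simp add: witness_def)
  ultimately have "i*k \<in> witness k j" by simp
  then have "i*k = j*k" by (auto simp: witness_def fillers_def)
  then show "i = j" using assms by simp
qed

lemma card_heads_le: "card {i. i < k*k \<and> i mod k = 0} \<le> k"
proof -
  have "{i. i < k*k \<and> i mod k = 0} \<subseteq> (\<lambda>j. j*k) ` {..<k}"
  proof
    fix i assume "i \<in> {i. i < k*k \<and> i mod k = 0}"
    then have "i = i div k * k" "i div k < k"
      using div_mult_mod_eq[of i k] by (auto simp: less_mult_imp_div_less)
    then show "i \<in> (\<lambda>j. j*k) ` {..<k}" by blast
  qed
  then have "card {i. i < k*k \<and> i mod k = 0} \<le> card ((\<lambda>j. j*k) ` {..<k})" by (intro card_mono) auto
  also have "\<dots> \<le> k" using card_image_le[of "{..<k}" "\<lambda>j. j*k"] by simp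
  finally show ?thesis .
qed

lemma prob_witness_ge:
  assumes "2 \<le> k" "j < k"
  shows "1 / (8 * real k) \<le> prob_input (k*k) (block_prob k) (witness k j)"
proof -
  let ?q = "1 / (2 * real k)" and ?H = "{i. i < k*k \<and> i mod k = 0}"
  let ?g = "\<lambda>i. if i \<in> witness k j then block_prob k i else 1 - block_prob k i"
  have k: "0 < k" using assms by simp
  have q: "0 < ?q" "?q < 1" using assms by auto
  have head: "j*k \<in> ?H" using assms(2) k by simp
  have card_heads: "card (?H - {j*k}) \<le> k" by (rule le_trans[OF card_Diff1_le card_heads_le])
  have "1 / 2 = 1 + real k * - ?q" using k by simp
  also have "\<dots> \<le> (1 - ?q) ^ k" using Bernoulli_inequality[of "- ?q" k] q by simp
  also have "\<dots> \<le> (1 - ?q) ^ card (?H - {j*k})"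
    by (rule power_decreasing[OF card_heads]) (use q in auto)
  also have "\<dots> = prod ?g (?H - {j*k})"
    by (simp add: witness_def fillers_def block_prob_def)
  finally have other_heads: "1 / 2 \<le> prod ?g (?H - {j*k})" .
  have "4 \<le> k*k" using mult_le_mono[OF assms(1) assms(1)] by simp
  then have "(4::real) \<le> real (k*k)" by (metis of_nat_le_iff of_nat_numeral)
  then have "1 / real (k*k) \<le> 1 / 2" by (simp add: divide_simps)
  then have "1 / 2 \<le> 1 - 1 / real (k*k)" by linarith
  also have "\<dots> \<le> prod ?g (fillers k)"
    using prod_fillers_ge[OF assms(1)] by (simp add: witness_def)
  finally have fillers: "1 / 2 \<le> prod ?g (fillers k)" .
  have "{..<k*k} = ?H \<union> fillers k" "?H \<inter> fillers k = {}" by (auto simp: fillers_def)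
  then have "prob_input (k*k) (block_prob k) (witness k j) = prod ?g ?H * prod ?g (fillers k)"
    unfolding prob_input_def by (simp add: prod.union_disjoint fillers_def)
  also have "\<dots> = ?q * prod ?g (?H - {j*k}) * prod ?g (fillers k)"
    using prod.remove[of ?H "j*k" ?g] head by (simp add: witness_def block_prob_def)
  finally have prob: "prob_input (k*k) (block_prob k) (witness k j)
      = ?q * prod ?g (?H - {j*k}) * prod ?g (fillers k)" .
  have "?q * (1/2) * (1/2) \<le> ?q * prod ?g (?H - {j*k}) * prod ?g (fillers k)"
    using q other_heads fillers by (intro mult_mono) auto
  moreover have "?q * (1/2) * (1/2) = 1 / (8 * real k)" by simp
  ultimately show ?thesis unfolding prob by simp
qed

lemma card_blocks_within_le:
  assumes "0 < k" "finite S"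
  shows "card {j \<in> {..<k}. block k j \<subseteq> S} * k \<le> card S"
proof -
  let ?J = "{j \<in> {..<k}. block k j \<subseteq> S}"
  have "card ?J * k = (\<Sum>j\<in>?J. card (block k j))" by (simp add: block_def)
  also have "\<dots> = card (\<Union>j\<in>?J. block k j)"
    by (rule card_UN_disjoint[symmetric]) (auto simp: block_disjoint[OF assms(1)], simp add: block_def)
  also have "\<dots> \<le> card S" using assms(2) by (intro card_mono) auto
  finally show ?thesis .
qed

lemma card_blocks_not_within_ge:
  assumes "0 < k" "finite S" "card S \<le> h * k"
  shows "k - h \<le> card {j \<in> {..<k}. \<not> block k j \<subseteq> S}"
proof -
  let ?Full = "{j \<in> {..<k}. block k j \<subseteq> S}"
  have "card ?Full * k \<le> h * k" using card_blocks_within_le[OF assms(1,2)] assms(3) by (rule le_trans)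
  then have "card ?Full \<le> h" using assms(1) by simp
  have "card {j \<in> {..<k}. \<not> block k j \<subseteq> S} = card ({..<k} - ?Full)"
    by (rule arg_cong[where f = card]) blast
  also have "\<dots> = k - card ?Full" by (subst card_Diff_subset) auto
  finally show ?thesis using \<open>card ?Full \<le> h\<close> by linarith
qed

lemma OPT_N_blocks_ge:
  assumes "2 \<le> k" "even k"
  shows "real k ^ 2 / 32 \<le> OPT_N (k*k) (dnf_eval (blocks k)) (\<lambda>_. 1) (block_prob k)"
  unfolding OPT_N_def
proof (rule cINF_greatest[OF perms_nonempty])
  fix \<sigma> assume \<sigma>: "\<sigma> \<in> perms (k*k)"
  let ?f = "dnf_eval (blocks k)" and ?P = "prob_input (k*k) (block_prob k)"
  let ?cost = "perm_cost (\<lambda>_. 1) (k*k) ?f \<sigma>"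
  have k: "0 < k" using assms by simp
  obtain h where h: "k = 2 * h" using assms(2) by blast
  define S where "S = set (take (k*h) \<sigma>)"
  define J where "J = {j \<in> {..<k}. \<not> block k j \<subseteq> S}"
  have "card S \<le> h * k" using card_length[of "take (k*h) \<sigma>"] by (simp add: S_def mult.commute)
  from card_blocks_not_within_ge[OF k _ this] have card_J: "h \<le> card J"
    using h by (simp add: S_def J_def)
  have cost_J: "real (k*h) \<le> ?cost (witness k j)" if "j \<in> J" for j
  proof -
    have j: "j < k" "\<not> block k j \<subseteq> S" using that by (auto simp: J_def)
    have "k*h \<le> perm_stop (k*k) ?f \<sigma> (witness k j)"
    proof (rule perm_stop_ge[OF \<sigma>])
      show "witness k j \<in> inputs (k*k)" using witness_subset[OF j(1)] by (simp add: inputs_def)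
      show "\<not> determined (k*k) ?f (set (take (k*h) \<sigma>)) (witness k j)"
        using block_subset_if_determined_witness[OF k j(1)] j(2) by (auto simp: S_def)
    qed
    then have "real (k*h) \<le> real (perm_stop (k*k) ?f \<sigma> (witness k j))" by (rule of_nat_mono)
    then show ?thesis by (simp add: perm_cost_def)
  qed
  have "real k ^ 2 / 32 = real h * (1 / (8 * real k) * real (k*h))"
    using k by (simp add: h field_simps power2_eq_square)
  also have "\<dots> \<le> real (card J) * (1 / (8 * real k) * real (k*h))"
    using card_J by (intro mult_right_mono) auto
  also have "\<dots> = (\<Sum>j\<in>J. 1 / (8 * real k) * real (k*h))" by simp
  also have "\<dots> \<le> (\<Sum>j\<in>J. ?P (witness k j) * ?cost (witness k j))"
    using prob_witness_ge[OF assms(1)] cost_J prob_input_nonneg[OF block_prob_unit_interval[OF assms(1)]]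
    by (intro sum_mono mult_mono) (auto simp: J_def)
  also have "\<dots> = (\<Sum>x\<in>witness k ` J. ?P x * ?cost x)"
    using inj_on_witness[OF k] by (intro sum.reindex[symmetric, unfolded comp_def]) (auto simp: J_def intro: inj_on_subset)
  also have "\<dots> \<le> exp_cost_perm (k*k) ?f (\<lambda>_. 1) (block_prob k) \<sigma>"
    using block_prob_unit_interval[OF assms(1)] witness_subset
    by (intro sum_le_exp_cost_perm) (auto simp: J_def inputs_def)
  finally show "real k ^ 2 / 32 \<le> exp_cost_perm (k*k) ?f (\<lambda>_. 1) (block_prob k) \<sigma>" .
qed

theorem theorem4:
  shows "\<exists>c0::real. c0 > 0 \<and> (\<exists>n0::nat. \<forall>n\<ge>n0. (\<exists>k::nat. even k \<and> n = k\<^sup>2) \<longrightarrow>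
     (\<exists>F p. read_once_dnf n F \<and> (\<forall>i<n. 0 < p i \<and> p i < 1) \<and>
        OPT_N n (dnf_eval F) (\<lambda>_. 1) p \<ge> c0 * sqrt (real n) * OPT_A n (dnf_eval F) (\<lambda>_. 1) p))"
proof (intro exI[of _ "1/96"] conjI exI[of _ 4] allI impI)
  fix n :: nat assume "4 \<le> n" "\<exists>k. even k \<and> n = k\<^sup>2"
  then obtain k where "even k" and n: "n = k*k" by (auto simp only: power2_eq_square)
  have "2 \<le> k"
  proof (rule ccontr)
    assume "\<not> 2 \<le> k"
    then have "k*k \<le> 1*1" by (intro mult_le_mono) auto
    then show False using \<open>4 \<le> n\<close> n by simp
  qed
  show "\<exists>F p. read_once_dnf n F \<and> (\<forall>i<n. 0 < p i \<and> p i < 1) \<and>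
      OPT_N n (dnf_eval F) (\<lambda>_. 1) p \<ge> 1/96 * sqrt (real n) * OPT_A n (dnf_eval F) (\<lambda>_. 1) p"
  proof (intro exI[of _ "blocks k"] exI[of _ "block_prob k"] conjI allI impI)
    show "read_once_dnf n (blocks k)" unfolding n using \<open>2 \<le> k\<close> by (intro read_once_dnf_blocks) simp
  next
    fix i show "0 < block_prob k i" "block_prob k i < 1" using block_prob_bounds[OF \<open>2 \<le> k\<close>] by auto
  next
    let ?OPT_A = "OPT_A (k*k) (dnf_eval (blocks k)) (\<lambda>_. 1) (block_prob k)"
    have "1/96 * real k * ?OPT_A \<le> 1/96 * real k * (2 * real k + 1)"
      using OPT_A_blocks_le[OF \<open>2 \<le> k\<close>] by (intro mult_left_mono) auto
    also have "\<dots> \<le> real k ^ 2 / 32"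
      using \<open>2 \<le> k\<close> by (simp add: power2_eq_square field_simps)
    also have "\<dots> \<le> OPT_N (k*k) (dnf_eval (blocks k)) (\<lambda>_. 1) (block_prob k)"
      by (rule OPT_N_blocks_ge[OF \<open>2 \<le> k\<close> \<open>even k\<close>])
    finally show "1/96 * sqrt (real n) * OPT_A n (dnf_eval (blocks k)) (\<lambda>_. 1) (block_prob k)
        \<le> OPT_N n (dnf_eval (blocks k)) (\<lambda>_. 1) (block_prob k)"
      by (simp add: n real_sqrt_mult_self)
  qed
qed simp

end
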